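(* Let $X$ be a finite connected simplicial complex and $\delta$ a cellular perversity. (1) The left quadratic dual of the quadratic algebra $A(X,\delta)$ is isomorphic to $B(X,-\delta)$. (2) The left quadratic dual of $B(X,\delta)$ is isomorphic to $A(X,-\delta)$.
   Context: Simplices are open; $\Delta\leftrightarrow\Delta'$ means one is a face of the other. Cellular perversity: $\delta:\mathbb Z_{\ge0}\to\mathbb Z$, $\delta(0)=0$, bijective from each $\{0,\dots,k\}$ onto an interval $\{a,\dots,a+k\}$, $a\le0$ (then $-\delta$ is also one); $\delta(\Delta)=\delta(\dim\Delta)$. For a cellular perversity $\varepsilon$, the quiver $Q(X,\varepsilon)$ has vertices the simplices and an arrow $\Delta\to\Delta'$ whenever $\Delta\leftrightarrow\Delta'$ and $\varepsilon(\Delta)=\varepsilon(\Delta')+1$ (so $Q(X,-\delta)$ is $Q(X,\delta)$ with arrows reversed). In the path algebra over a field $\mathbb F$ (char $0$), products $xy$ mean path $y$ followed by $x$. $A(X,\varepsilon)$ is the quotient by the relations $\sum_{\Delta:\varepsilon(\Delta)=k,\ \Delta'\leftrightarrow\Delta\leftrightarrow\Delta''}a(\Delta,\Delta'')a(\Delta',\Delta)=0$ for all $\Delta',\Delta''$ with $\varepsilon(\Delta')=k+1$, $\varepsilon(\Delta'')=k-1$; $B(X,\varepsilon)$ is the quotient by $b(\Delta_1,\Delta'')b(\Delta',\Delta_1)=b(\Delta_2,\Delta'')b(\Delta',\Delta_2)$ whenever $\varepsilon(\Delta')=k+1$, $\varepsilon(\Delta_j)=k$, $\varepsilon(\Delta'')=k-1$,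 $\Delta'\leftrightarrow\Delta_j\leftrightarrow\Delta''$. Both are quadratic algebras over the semisimple algebra $k=\bigoplus_\Delta\mathbb F e(\Delta)$; the left quadratic dual of $T_k(V)/(R)$, $R\subseteq V\otimes_kV$, is $T_k(V^* )/(R^\perp)$ (in the sense of Beilinson–Ginzburg–Soergel). *)

theory Defs
  imports "HOL-Algebra.QuotRing"
begin

definition simplicial_complex :: "'v set set \<Rightarrow> bool" where
  "simplicial_complex X \<longleftrightarrow>
     (\<forall>D\<in>X. finite D \<and> D \<noteq> {}) \<and> (\<forall>D\<in>X. \<forall>G. G \<subseteq> D \<and> G \<noteq> {} \<longrightarrow> G \<in> X)"

text \<open>Connectedness (of the geometric realisation) = connectedness of the 1-skeleton.\<close>
definition sc_connected :: "'v set set \<Rightarrow> bool" where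
  "sc_connected X \<longleftrightarrow>
     (\<forall>u\<in>\<Union>X. \<forall>w\<in>\<Union>X. (u, w) \<in> {(x, y). {x, y} \<in> X}\<^sup>*)"

definition sdim :: "'v set \<Rightarrow> nat" where
  "sdim D = card D - 1"

definition incid :: "'v set \<Rightarrow> 'v set \<Rightarrow> bool" where
  "incid D D' \<longleftrightarrow> D \<subset> D' \<or> D' \<subset> D"

definition cellular_perversity :: "(nat \<Rightarrow> int) \<Rightarrow> bool" where
  "cellular_perversity d \<longleftrightarrow>
     d 0 = 0 \<and> (\<forall>k. \<exists>a\<le>0. bij_betw d {0..k} {a..a + int k})"

text \<open>A quiver with at most one arrow between two vertices is given by a vertex set S and
an arrow relation E (pairs (source, target)).  A path is the nonempty list of its vertices;
the trivial path [v] is the idempotent e(v).  Quadratic data: (S, E, R) with R a set of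
(spanning) relations, elements of the path algebra of degree 2.\<close>

type_synonym ('s, 'a) qdata = "'s set \<times> ('s \<times> 's) set \<times> ('s list \<Rightarrow> 'a) set"

definition qpaths :: "'s set \<Rightarrow> ('s \<times> 's) set \<Rightarrow> 's list set" where
  "qpaths S E = {p. p \<noteq> [] \<and> set p \<subseteq> S \<and>
                    (\<forall>i. Suc i < length p \<longrightarrow> (p ! i, p ! Suc i) \<in> E)}"

text \<open>Path algebra over the field 'a: finitely supported functions on paths.
Product x * y = "path of y followed by path of x".\<close>
definition path_ring :: "'s set \<Rightarrow> ('s \<times> 's) set \<Rightarrow> ('s list \<Rightarrow> 'a::field) ring" where
  "path_ring S E =
    \<lparr>carrier = {f. finite {p. f p \<noteq> 0} \<and> {p. f p \<noteq> 0} \<subseteq> qpaths S E},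
     mult = (\<lambda>x y p. if p \<in> qpaths S E
                     then (\<Sum>i<length p. y (take (Suc i) p) * x (drop i p)) else 0),
     one = (\<lambda>p. if (\<exists>v\<in>S. p = [v]) then 1 else 0),
     zero = (\<lambda>p. 0),
     add = (\<lambda>x y p. x p + y p)\<rparr>"

definition qring :: "('s, 'a::field) qdata \<Rightarrow> ('s list \<Rightarrow> 'a) ring" where
  "qring D = (case D of (S, E, R) \<Rightarrow> path_ring S E)"

definition qideal :: "('s, 'a::field) qdata \<Rightarrow> ('s list \<Rightarrow> 'a) set" where
  "qideal D = genideal (qring D) (snd (snd D))"

definition qalg :: "('s, 'a::field) qdata \<Rightarrow> ('s list \<Rightarrow> 'a) set ring" where
  "qalg D = qring D Quot qideal D"

definition qcls :: "('s, 'a::field) qdata \<Rightarrow> ('s list \<Rightarrow> 'a) \<Rightarrow> ('s list \<Rightarrow> 'a) set" where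
  "qcls D x = a_r_coset (qring D) (qideal D) x"

definition scal_idem :: "'a::field \<Rightarrow> 's \<Rightarrow> ('s list \<Rightarrow> 'a)" where
  "scal_idem c v = (\<lambda>p. if p = [v] then c else 0)"

definition qhomog :: "('s, 'a::field) qdata \<Rightarrow> nat \<Rightarrow> ('s list \<Rightarrow> 'a) set set" where
  "qhomog D n = {qcls D x | x. x \<in> carrier (qring D) \<and> (\<forall>p. x p \<noteq> 0 \<longrightarrow> length p = Suc n)}"

text \<open>Isomorphism of graded quadratic algebras over k = (sum of F e(v)):
a ring isomorphism which is k-linear (fixes all c e(v)) and preserves the grading.\<close>
definition qiso :: "('s, 'a::field) qdata \<Rightarrow> ('s, 'a) qdata \<Rightarrow> bool" where
  "qiso D1 D2 \<longleftrightarrow> fst D1 = fst D2 \<and>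
     (\<exists>\<phi>. \<phi> \<in> ring_iso (qalg D1) (qalg D2) \<and>
          (\<forall>c. \<forall>v\<in>fst D1. \<phi> (qcls D1 (scal_idem c v)) = qcls D2 (scal_idem c v)) \<and>
          (\<forall>n. \<phi> ` qhomog D1 n = qhomog D2 n))"

text \<open>Left quadratic dual T_k(V^*)/(R^\<bottom>): V^* is spanned by the dual arrows, i.e. the arrows
of the opposite quiver; the dual basis element of the path [a,b,c] in E is the reversed
path [c,b,a] in the opposite quiver, and R^\<bottom> is the orthogonal of R in degree 2.\<close>
definition ldual :: "('s, 'a::field) qdata \<Rightarrow> ('s, 'a) qdata" where
  "ldual D = (case D of (S, E, R) \<Rightarrow>
     (S, E\<inverse>,
      {s \<in> carrier (path_ring S (E\<inverse>)). (\<forall>p. s p \<noteq> 0 \<longrightarrow> length p = 3) \<and>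
         (\<forall>r\<in>R. (\<Sum>p\<in>{p \<in> qpaths S E. length p = 3}. s (rev p) * r p) = 0)}))"

definition pquiver :: "'v set set \<Rightarrow> (nat \<Rightarrow> int) \<Rightarrow> ('v set \<times> 'v set) set" where
  "pquiver X e = {(D, D'). D \<in> X \<and> D' \<in> X \<and> incid D D' \<and> e (sdim D) = e (sdim D') + 1}"

definition A_rel :: "'v set set \<Rightarrow> (nat \<Rightarrow> int) \<Rightarrow> 'v set \<Rightarrow> 'v set \<Rightarrow> ('v set list \<Rightarrow> 'a::field)" where
  "A_rel X e D' D'' = (\<lambda>p. if p \<in> {[D', D, D''] | D. D \<in> X \<and> e (sdim D) = e (sdim D'') + 1 \<and>
                                     incid D' D \<and> incid D D''} then 1 else 0)"

definition A_data :: "'v set set \<Rightarrow> (nat \<Rightarrow> int) \<Rightarrow> ('v set, 'a::field) qdata" where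
  "A_data X e = (X, pquiver X e,
     {A_rel X e D' D'' | D' D''. D' \<in> X \<and> D'' \<in> X \<and> e (sdim D') = e (sdim D'') + 2})"

definition B_data :: "'v set set \<Rightarrow> (nat \<Rightarrow> int) \<Rightarrow> ('v set, 'a::field) qdata" where
  "B_data X e = (X, pquiver X e,
     {(\<lambda>p. (if p = [D', D1, D''] then 1 else 0) - (if p = [D', D2, D''] then 1 else 0))
       | D' D1 D2 D''. D' \<in> X \<and> D1 \<in> X \<and> D2 \<in> X \<and> D'' \<in> X \<and>
          e (sdim D1) = e (sdim D'') + 1 \<and> e (sdim D2) = e (sdim D'') + 1 \<and>
          e (sdim D') = e (sdim D'') + 2 \<and>
          incid D' D1 \<and> incid D1 D'' \<and> incid D' D2 \<and> incid D2 D''})"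

end

theory Submission
  imports Defs
begin

(* Split V \<otimes> V by the endpoints x, y of the degree-2 paths x -> m -> y of the quiver of \<delta>.
   On each summand the relation of A(X,\<delta>) is the all-ones vector and those of B(X,\<delta>) are the
   differences of basis vectors; each of these two spaces is the orthogonal of the other.
   Reversing arrows turns the quiver of \<delta> into that of -\<delta>, so each dual has the same quiver
   as the claimed algebra and its relations generate the same ideal; the identity is then the
   isomorphism. The ideal equality is proved by shrinking supports: a nonzero s in R^\<bottom> loses
   the path u from its support when we subtract s(u) times a generator that is 1 at u and is
   supported inside the support of s. *)

abbreviation support :: "('b \<Rightarrow> 'a::zero) \<Rightarrow> 'b set" where
  "support f \<equiv> {x. f x \<noteq> 0}"

definition path_scalar :: "'s set \<Rightarrow> 'a::field \<Rightarrow> 's list \<Rightarrow> 'a" where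
  "path_scalar S c = (\<lambda>p. if \<exists>v\<in>S. p = [v] then c else 0)"

lemma path_scalar_carrier:
  assumes "finite S"
  shows "path_scalar S c \<in> carrier (path_ring S E)"
proof -
  have "support (path_scalar S c) \<subseteq> (\<lambda>v. [v]) ` S"
    by (auto simp: path_scalar_def split: if_splits)
  moreover have "support (path_scalar S c) \<subseteq> qpaths S E"
    by (auto simp: path_scalar_def qpaths_def split: if_splits)
  ultimately show ?thesis
    using assms finite_subset by (fastforce simp: path_ring_def)
qed

lemma path_ring_mult_path_scalar:
  assumes "g \<in> carrier (path_ring S E)"
  shows "g \<otimes>\<^bsub>path_ring S E\<^esub> path_scalar S c = (\<lambda>p. c * g p)"
proof
  fix p
  show "(g \<otimes>\<^bsub>path_ring S E\<^esub> path_scalar S c) p = c * g p"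
  proof (cases "p \<in> qpaths S E")
    case True
    then obtain v q where p: "p = v # q" and "v \<in> S" by (cases p) (auto simp: qpaths_def)
    then have "path_scalar S c (take (Suc i) p) * g (drop i p) = (if i = 0 then c * g p else 0)"
      if "i < length p" for i
      using that by (cases i) (auto simp: path_scalar_def)
    then have "(\<Sum>i<length p. path_scalar S c (take (Suc i) p) * g (drop i p)) = c * g p"
      using p by (simp add: sum.delta)
    with True show ?thesis by (simp add: path_ring_def)
  next
    case False
    with assms show ?thesis by (auto simp: path_ring_def)
  qed
qed

lemma support_cancel_psubset:
  fixes s g :: "'b \<Rightarrow> 'a::field"
  assumes "s u \<noteq> 0" and "g u = 1" and "support g \<subseteq> support s"
  shows "support (\<lambda>p. s p - s u * g p) \<subset> support s"
proof -
  have "support (\<lambda>p. s p - s u * g p) \<subseteq> support s - {u}"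
    using assms(2,3) by auto
  with assms(1) show ?thesis by blast
qed

lemma genideal_path_ring_eq_by_reduction:
  fixes R G :: "('s list \<Rightarrow> 'a::field) set"
  assumes "finite S" and R: "R \<subseteq> carrier (path_ring S E)" and "G \<subseteq> R"
    and closed: "\<And>s g c. s \<in> R \<Longrightarrow> g \<in> R \<Longrightarrow> (\<lambda>p. s p - c * g p) \<in> R"
    and reduce: "\<And>s u. s \<in> R \<Longrightarrow> s u \<noteq> 0 \<Longrightarrow> \<exists>g\<in>G. g u = 1 \<and> support g \<subseteq> support s"
  shows "genideal (path_ring S E) R = genideal (path_ring S E) G"
proof -
  have "R \<subseteq> I" if I: "ideal I (path_ring S E)" and "G \<subseteq> I" for I
  proof
    fix s assume "s \<in> R"
    then show "s \<in> I"
    proof (induction s rule: measure_induct_rule[where f = "\<lambda>s. card (support s)"])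
      case (less s)
      show ?case
      proof (cases "s = (\<lambda>p. 0)")
        case True
        then show ?thesis
          using additive_subgroup.zero_closed[OF ideal.axioms(1)[OF I]] by (simp add: path_ring_def)
      next
        case False
        then obtain u where "s u \<noteq> 0" by auto
        then obtain g where "g \<in> G" and "g u = 1" and "support g \<subseteq> support s"
          using reduce[OF less.prems] by blast
        have "finite (support s)" using less.prems R by (auto simp: path_ring_def)
        then have "card (support (\<lambda>p. s p - s u * g p)) < card (support s)"
          using support_cancel_psubset[OF \<open>s u \<noteq> 0\<close> \<open>g u = 1\<close> \<open>support g \<subseteq> support s\<close>]
          by (rule psubset_card_mono)
        moreover have "(\<lambda>p. s p - s u * g p) \<in> R"
          using closed less.prems \<open>g \<in> G\<close> \<open>G \<subseteq> R\<close> by blast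
        ultimately have rest: "(\<lambda>p. s p - s u * g p) \<in> I"
          by (rule less.IH)
        have "g \<otimes>\<^bsub>path_ring S E\<^esub> path_scalar S (s u) \<in> I"
          using ideal.I_r_closed[OF I] path_scalar_carrier[OF \<open>finite S\<close>] \<open>g \<in> G\<close> \<open>G \<subseteq> I\<close>
          by blast
        moreover have "g \<in> carrier (path_ring S E)"
          using \<open>g \<in> G\<close> \<open>G \<subseteq> R\<close> R by blast
        ultimately have "(\<lambda>p. s u * g p) \<in> I"
          by (simp add: path_ring_mult_path_scalar)
        with rest have "(\<lambda>p. s p - s u * g p) \<oplus>\<^bsub>path_ring S E\<^esub> (\<lambda>p. s u * g p) \<in> I"
          using additive_subgroup.a_closed[OF ideal.axioms(1)[OF I]] by blast
        then show ?thesis by (simp add: path_ring_def)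
      qed
    qed
  qed
  then show ?thesis
    unfolding genideal_def using \<open>G \<subseteq> R\<close> by (intro arg_cong[where f = Inter]) blast
qed

lemma qiso_if_genideal_eq:
  assumes "genideal (path_ring S E) R1 = genideal (path_ring S E) R2"
  shows "qiso (S, E, R1) (S, E, R2)"
proof -
  have ideal: "qideal (S, E, R1) = qideal (S, E, R2)"
    using assms by (simp add: qideal_def qring_def)
  then have "qcls (S, E, R1) = qcls (S, E, R2)"
    by (simp add: qcls_def qring_def fun_eq_iff)
  moreover have "id \<in> ring_iso (qalg (S, E, R1)) (qalg (S, E, R2))"
    using ideal by (simp add: qalg_def qring_def ring_iso_def ring_hom_def)
  ultimately show ?thesis
    unfolding qiso_def by (intro conjI exI[of _ id]) (simp_all add: qhomog_def qring_def)
qed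

lemma Cons3_in_qpaths_iff:
  "[a, b, c] \<in> qpaths S E \<longleftrightarrow> a \<in> S \<and> b \<in> S \<and> c \<in> S \<and> (a, b) \<in> E \<and> (b, c) \<in> E"
  by (auto simp: qpaths_def less_Suc_eq nth_Cons split: nat.splits)

definition deg2_paths :: "'s set \<Rightarrow> ('s \<times> 's) set \<Rightarrow> 's list set" where
  "deg2_paths S E = {p \<in> qpaths S E. length p = 3}"

lemma finite_deg2_paths: "finite S \<Longrightarrow> finite (deg2_paths S E)"
  by (rule finite_subset[OF _ finite_lists_length_eq[of S 3]]) (auto simp: deg2_paths_def qpaths_def)

lemma Cons3_in_deg2_paths_iff: "[a, b, c] \<in> deg2_paths S E \<longleftrightarrow> [a, b, c] \<in> qpaths S E"
  by (simp add: deg2_paths_def)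

definition dual_relations ::
    "'s set \<Rightarrow> ('s \<times> 's) set \<Rightarrow> ('s list \<Rightarrow> 'a::field) set \<Rightarrow> ('s list \<Rightarrow> 'a) set" where
  "dual_relations S E R = {s \<in> carrier (path_ring S (E\<inverse>)). (\<forall>p. s p \<noteq> 0 \<longrightarrow> length p = 3) \<and>
     (\<forall>r\<in>R. (\<Sum>p\<in>deg2_paths S E. s (rev p) * r p) = 0)}"

lemma ldual_eq: "ldual (S, E, R) = (S, E\<inverse>, dual_relations S E R)"
  by (simp add: ldual_def dual_relations_def deg2_paths_def)

lemma dual_relations_carrier: "dual_relations S E R \<subseteq> carrier (path_ring S (E\<inverse>))"
  by (auto simp: dual_relations_def)

lemma dual_relations_orthogonal:
  "s \<in> dual_relations S E R \<Longrightarrow> r \<in> R \<Longrightarrow> (\<Sum>p\<in>deg2_paths S E. s (rev p) * r p) = 0"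
  by (simp add: dual_relations_def)

lemma dual_relations_Cons3:
  assumes "s \<in> dual_relations S E R" and "s u \<noteq> 0"
  obtains a b c where "u = [a, b, c]" and "[c, b, a] \<in> qpaths S E"
proof -
  have "length u = 3" and "u \<in> qpaths S (E\<inverse>)"
    using assms by (auto simp: dual_relations_def path_ring_def)
  then show ?thesis
    using that by (auto simp: numeral_3_eq_3 length_Suc_conv Cons3_in_qpaths_iff)
qed

lemma dual_relations_diff:
  assumes s: "s \<in> dual_relations S E R" and g: "g \<in> dual_relations S E R"
  shows "(\<lambda>p. s p - c * g p) \<in> dual_relations S E R"
proof -
  have supp: "support (\<lambda>p. s p - c * g p) \<subseteq> support s \<union> support g" by auto
  have "(\<lambda>p. s p - c * g p) \<in> carrier (path_ring S (E\<inverse>))"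
    using s g finite_subset[OF supp] supp by (auto simp: dual_relations_def path_ring_def)
  moreover have "length p = 3" if "s p - c * g p \<noteq> 0" for p
    using that s g by (cases "s p = 0") (auto simp: dual_relations_def)
  moreover have "(\<Sum>p\<in>deg2_paths S E. (s (rev p) - c * g (rev p)) * r p) = 0" if "r \<in> R" for r
    using s g that
    by (simp add: dual_relations_def left_diff_distrib sum_subtractf mult.assoc flip: sum_distrib_left)
  ultimately show ?thesis by (simp add: dual_relations_def)
qed

definition path_diff :: "'s list \<Rightarrow> 's list \<Rightarrow> 's list \<Rightarrow> 'a::field" where
  "path_diff u v = (\<lambda>p. (if p = u then 1 else 0) - (if p = v then 1 else 0))"

lemma path_diff_carrier:
  assumes "u \<in> qpaths S E" and "v \<in> qpaths S E"
  shows "path_diff u v \<in> carrier (path_ring S E)"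
proof -
  have "support (path_diff u v) \<subseteq> {u, v}"
    by (auto simp: path_diff_def split: if_splits)
  then show ?thesis
    using assms finite_subset by (fastforce simp: path_ring_def)
qed

lemma sum_mult_path_diff:
  assumes "finite P" and "u \<in> P" and "v \<in> P"
  shows "(\<Sum>p\<in>P. f p * path_diff u v p) = f u - f v"
proof -
  have "(\<Sum>p\<in>P. f p * path_diff u v p) = (\<Sum>p\<in>P. (if p = u then f p else 0) - (if p = v then f p else 0))"
    by (intro sum.cong) (auto simp: path_diff_def)
  with assms show ?thesis by (simp add: sum_subtractf sum.delta)
qed

lemma path_diff_rev: "path_diff u v (rev p) = path_diff (rev u) (rev v) p"
  by (auto simp: path_diff_def)

lemma pquiver_uminus: "pquiver X (\<lambda>n. - e n) = (pquiver X e)\<inverse>"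
  by (auto simp: pquiver_def incid_def)

lemma Cons3_in_pquiver_paths_iff:
  "[a, b, c] \<in> qpaths X (pquiver X e) \<longleftrightarrow> a \<in> X \<and> b \<in> X \<and> c \<in> X \<and> incid a b \<and> incid b c \<and>
     e (sdim a) = e (sdim b) + 1 \<and> e (sdim b) = e (sdim c) + 1"
  by (auto simp: Cons3_in_qpaths_iff pquiver_def)

definition A_relations :: "'v set set \<Rightarrow> (nat \<Rightarrow> int) \<Rightarrow> ('v set list \<Rightarrow> 'a::field) set" where
  "A_relations X e = {A_rel X e a c | a c. a \<in> X \<and> c \<in> X \<and> e (sdim a) = e (sdim c) + 2}"

definition B_relations :: "'v set set \<Rightarrow> (nat \<Rightarrow> int) \<Rightarrow> ('v set list \<Rightarrow> 'a::field) set" where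
  "B_relations X e = {path_diff [a, b, c] [a, b', c] | a b b' c.
     [a, b, c] \<in> qpaths X (pquiver X e) \<and> [a, b', c] \<in> qpaths X (pquiver X e)}"

lemma A_data_eq: "A_data X e = (X, pquiver X e, A_relations X e)"
  by (simp add: A_data_def A_relations_def)

lemma B_data_eq: "B_data X e = (X, pquiver X e, B_relations X e)"
  unfolding B_data_def B_relations_def path_diff_def Cons3_in_pquiver_paths_iff prod.inject
  by (intro conjI refl Collect_cong ex_cong1) auto

lemma A_rel_eq:
  assumes "a \<in> X" and "c \<in> X" and "e (sdim a) = e (sdim c) + 2"
  shows "A_rel X e a c = (\<lambda>p. if \<exists>b. p = [a, b, c] \<and> p \<in> qpaths X (pquiver X e) then 1 else 0)"
  using assms by (auto simp: A_rel_def Cons3_in_pquiver_paths_iff fun_eq_iff)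

lemma A_rel_carrier:
  assumes "finite X" and ac: "a \<in> X" "c \<in> X" "e (sdim a) = e (sdim c) + 2"
  shows "A_rel X e a c \<in> carrier (path_ring X (pquiver X e))"
proof -
  have "support (A_rel X e a c) \<subseteq> (\<lambda>b. [a, b, c]) ` X"
    by (auto simp: A_rel_def split: if_splits)
  moreover have "support (A_rel X e a c) \<subseteq> qpaths X (pquiver X e)"
    by (auto simp: A_rel_eq[OF ac] split: if_splits)
  ultimately show ?thesis
    using assms(1) finite_subset by (fastforce simp: path_ring_def)
qed

lemma sum_mult_A_rel:
  assumes "finite X" and ac: "a \<in> X" "c \<in> X" "e (sdim a) = e (sdim c) + 2"
  shows "(\<Sum>p\<in>deg2_paths X (pquiver X e). f p * A_rel X e a c p)
       = (\<Sum>b\<in>{b. [a, b, c] \<in> qpaths X (pquiver X e)}. f [a, b, c])"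
proof -
  let ?M = "{b. [a, b, c] \<in> qpaths X (pquiver X e)}"
  have "(\<Sum>p\<in>deg2_paths X (pquiver X e). f p * A_rel X e a c p)
      = (\<Sum>p\<in>deg2_paths X (pquiver X e). if \<exists>b. p = [a, b, c] \<and> p \<in> qpaths X (pquiver X e) then f p else 0)"
    by (intro sum.cong) (auto simp: A_rel_eq[OF ac])
  also have "\<dots> = sum f {p \<in> deg2_paths X (pquiver X e). \<exists>b. p = [a, b, c] \<and> p \<in> qpaths X (pquiver X e)}"
    by (simp add: sum.inter_filter finite_deg2_paths[OF assms(1)])
  also have "{p \<in> deg2_paths X (pquiver X e). \<exists>b. p = [a, b, c] \<and> p \<in> qpaths X (pquiver X e)}
           = (\<lambda>b. [a, b, c]) ` ?M"
    by (auto simp: deg2_paths_def)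
  also have "sum f ((\<lambda>b. [a, b, c]) ` ?M) = (\<Sum>b\<in>?M. f [a, b, c])"
    by (simp add: sum.reindex inj_on_def)
  finally show ?thesis .
qed

lemma B_relations_uminus_subset_dual_A:
  fixes X :: "'v set set"
  assumes "finite X"
  shows "(B_relations X (\<lambda>n. - d n) :: ('v set list \<Rightarrow> 'a::field) set)
           \<subseteq> dual_relations X (pquiver X d) (A_relations X d)"
proof
  fix g :: "'v set list \<Rightarrow> 'a" assume "g \<in> B_relations X (\<lambda>n. - d n)"
  then obtain a b b' c where g: "g = path_diff [a, b, c] [a, b', c]"
    and paths: "[a, b, c] \<in> qpaths X ((pquiver X d)\<inverse>)" "[a, b', c] \<in> qpaths X ((pquiver X d)\<inverse>)"
    by (auto simp: B_relations_def pquiver_uminus)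
  then have rev_paths: "[c, b, a] \<in> deg2_paths X (pquiver X d)" "[c, b', a] \<in> deg2_paths X (pquiver X d)"
    by (auto simp: Cons3_in_deg2_paths_iff Cons3_in_qpaths_iff)
  have "(\<Sum>p\<in>deg2_paths X (pquiver X d). g (rev p) * r p) = 0" if r: "r \<in> A_relations X d" for r
  proof -
    obtain a' c' where r: "r = A_rel X d a' c'"
      and a'c': "a' \<in> X" "c' \<in> X" "d (sdim a') = d (sdim c') + 2"
      using r by (auto simp: A_relations_def)
    have "(\<Sum>p\<in>deg2_paths X (pquiver X d). g (rev p) * r p)
        = (\<Sum>p\<in>deg2_paths X (pquiver X d). r p * path_diff [c, b, a] [c, b', a] p)"
      by (simp add: g path_diff_rev mult.commute)
    also have "\<dots> = r [c, b, a] - r [c, b', a]"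
      using finite_deg2_paths[OF assms] rev_paths by (rule sum_mult_path_diff)
    also have "\<dots> = 0"
      using rev_paths by (simp add: r A_rel_eq[OF a'c'] deg2_paths_def)
    finally show ?thesis .
  qed
  moreover have "g \<in> carrier (path_ring X ((pquiver X d)\<inverse>))"
    using paths by (simp add: g path_diff_carrier)
  moreover have "length p = 3" if "g p \<noteq> 0" for p
    using that by (auto simp: g path_diff_def split: if_splits)
  ultimately show "g \<in> dual_relations X (pquiver X d) (A_relations X d)"
    by (simp add: dual_relations_def)
qed

lemma B_relation_within_support_of_dual_A:
  fixes X :: "'v set set" and s :: "'v set list \<Rightarrow> 'a::field"
  assumes "finite X" and s: "s \<in> dual_relations X (pquiver X d) (A_relations X d)" and "s u \<noteq> 0"
  shows "\<exists>g\<in>B_relations X (\<lambda>n. - d n). g u = (1::'a) \<and> support g \<subseteq> support s"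
proof -
  obtain x m y where u: "u = [x, m, y]" and path: "[y, m, x] \<in> qpaths X (pquiver X d)"
    using dual_relations_Cons3[OF s \<open>s u \<noteq> 0\<close>] .
  let ?M = "{b. [y, b, x] \<in> qpaths X (pquiver X d)}"
  have yx: "y \<in> X" "x \<in> X" "d (sdim y) = d (sdim x) + 2"
    using path by (auto simp: Cons3_in_pquiver_paths_iff)
  then have "A_rel X d y x \<in> A_relations X d"
    by (auto simp: A_relations_def)
  then have "(\<Sum>p\<in>deg2_paths X (pquiver X d). s (rev p) * A_rel X d y x p) = 0"
    by (rule dual_relations_orthogonal[OF s])
  then have "(\<Sum>b\<in>?M. s [x, b, y]) = 0"
    using sum_mult_A_rel[OF \<open>finite X\<close> yx, of "\<lambda>p. s (rev p)"] by simp
  moreover have "finite ?M"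
    using \<open>finite X\<close> by (rule finite_subset[rotated]) (auto simp: Cons3_in_qpaths_iff)
  moreover have "m \<in> ?M" using path by simp
  ultimately have "(\<Sum>b\<in>?M - {m}. s [x, b, y]) \<noteq> 0"
    using \<open>s u \<noteq> 0\<close> u by (auto simp: sum.remove)
  then obtain m' where m': "[y, m', x] \<in> qpaths X (pquiver X d)" "m' \<noteq> m" "s [x, m', y] \<noteq> 0"
    by (auto dest: sum.not_neutral_contains_not_neutral)
  let ?g = "path_diff [x, m, y] [x, m', y] :: 'v set list \<Rightarrow> 'a"
  show ?thesis
  proof (intro bexI conjI)
    show "?g \<in> B_relations X (\<lambda>n. - d n)"
      using path m'(1) unfolding B_relations_def pquiver_uminus by (auto simp: Cons3_in_qpaths_iff)
    show "?g u = 1"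
      using m'(2) by (simp add: u path_diff_def)
    show "support ?g \<subseteq> support s"
      using m'(3) \<open>s u \<noteq> 0\<close> by (auto simp: u path_diff_def split: if_splits)
  qed
qed

lemma qiso_ldual_A_data_B_data:
  assumes "finite X"
  shows "qiso (ldual (A_data X d :: ('v set, 'a::field) qdata)) (B_data X (\<lambda>n. - d n))"
  unfolding A_data_eq B_data_eq ldual_eq pquiver_uminus
  by (intro qiso_if_genideal_eq genideal_path_ring_eq_by_reduction assms dual_relations_carrier
      B_relations_uminus_subset_dual_A dual_relations_diff B_relation_within_support_of_dual_A)

lemma A_relations_uminus_subset_dual_B:
  fixes X :: "'v set set"
  assumes "finite X"
  shows "(A_relations X (\<lambda>n. - d n) :: ('v set list \<Rightarrow> 'a::field) set)
           \<subseteq> dual_relations X (pquiver X d) (B_relations X d)"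
proof
  fix r :: "'v set list \<Rightarrow> 'a" assume "r \<in> A_relations X (\<lambda>n. - d n)"
  then obtain a c where r: "r = A_rel X (\<lambda>n. - d n) a c"
    and ac: "a \<in> X" "c \<in> X" "- d (sdim a) = - d (sdim c) + 2"
    by (auto simp: A_relations_def)
  have "(\<Sum>p\<in>deg2_paths X (pquiver X d). r (rev p) * g p) = 0" if g: "g \<in> B_relations X d" for g
  proof -
    obtain a' b b' c' where g: "g = path_diff [a', b, c'] [a', b', c']"
      and paths: "[a', b, c'] \<in> deg2_paths X (pquiver X d)" "[a', b', c'] \<in> deg2_paths X (pquiver X d)"
      using g by (auto simp: B_relations_def Cons3_in_deg2_paths_iff)
    have "(\<Sum>p\<in>deg2_paths X (pquiver X d). r (rev p) * g p) = r [c', b, a'] - r [c', b', a']"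
      using sum_mult_path_diff[OF finite_deg2_paths[OF assms] paths, of "\<lambda>p. r (rev p)"] by (simp add: g)
    also have "\<dots> = 0"
      using paths by (simp add: r A_rel_eq[OF ac] pquiver_uminus Cons3_in_qpaths_iff deg2_paths_def)
    finally show ?thesis .
  qed
  moreover have "r \<in> carrier (path_ring X ((pquiver X d)\<inverse>))"
    using A_rel_carrier[OF assms ac] by (simp add: r pquiver_uminus)
  moreover have "length p = 3" if "r p \<noteq> 0" for p
    using that by (auto simp: r A_rel_def split: if_splits)
  ultimately show "r \<in> dual_relations X (pquiver X d) (B_relations X d)"
    by (simp add: dual_relations_def)
qed

lemma A_relation_within_support_of_dual_B:
  fixes X :: "'v set set" and s :: "'v set list \<Rightarrow> 'a::field"
  assumes "finite X" and s: "s \<in> dual_relations X (pquiver X d) (B_relations X d)" and "s u \<noteq> 0"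
  shows "\<exists>r\<in>A_relations X (\<lambda>n. - d n). r u = (1::'a) \<and> support r \<subseteq> support s"
proof -
  obtain x m y where u: "u = [x, m, y]" and path: "[y, m, x] \<in> qpaths X (pquiver X d)"
    using dual_relations_Cons3[OF s \<open>s u \<noteq> 0\<close>] .
  have xy: "x \<in> X" "y \<in> X" "- d (sdim x) = - d (sdim y) + 2"
    using path by (auto simp: Cons3_in_pquiver_paths_iff)
  let ?r = "A_rel X (\<lambda>n. - d n) x y :: 'v set list \<Rightarrow> 'a"
  have s_const: "s [x, b, y] = s u" if "[y, b, x] \<in> qpaths X (pquiver X d)" for b
  proof -
    have "path_diff [y, b, x] [y, m, x] \<in> B_relations X d"
      using that path by (auto simp: B_relations_def)
    then have "(\<Sum>p\<in>deg2_paths X (pquiver X d). s (rev p) * path_diff [y, b, x] [y, m, x] p) = 0"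
      by (rule dual_relations_orthogonal[OF s])
    moreover have "(\<Sum>p\<in>deg2_paths X (pquiver X d). s (rev p) * path_diff [y, b, x] [y, m, x] p)
        = s [x, b, y] - s [x, m, y]"
      using finite_deg2_paths[OF \<open>finite X\<close>] that path
      by (simp add: sum_mult_path_diff Cons3_in_deg2_paths_iff)
    ultimately show ?thesis by (simp add: u)
  qed
  show ?thesis
  proof (intro bexI conjI)
    show "?r \<in> A_relations X (\<lambda>n. - d n)"
      using xy by (auto simp: A_relations_def)
    show "?r u = 1"
      using path by (simp add: A_rel_eq[OF xy] u pquiver_uminus Cons3_in_qpaths_iff)
    show "support ?r \<subseteq> support s"
    proof
      fix p assume "p \<in> support ?r"
      then obtain b where "p = [x, b, y]" and "[y, b, x] \<in> qpaths X (pquiver X d)"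
        by (auto simp: A_rel_eq[OF xy] pquiver_uminus Cons3_in_qpaths_iff split: if_splits)
      with s_const \<open>s u \<noteq> 0\<close> show "p \<in> support s" by simp
    qed
  qed
qed

lemma qiso_ldual_B_data_A_data:
  assumes "finite X"
  shows "qiso (ldual (B_data X d :: ('v set, 'a::field) qdata)) (A_data X (\<lambda>n. - d n))"
  unfolding A_data_eq B_data_eq ldual_eq pquiver_uminus
  by (intro qiso_if_genideal_eq genideal_path_ring_eq_by_reduction assms dual_relations_carrier
      A_relations_uminus_subset_dual_B dual_relations_diff A_relation_within_support_of_dual_B)

theorem lemma4p2p3:
  fixes X :: "'v set set" and \<delta> :: "nat \<Rightarrow> int"
  assumes "simplicial_complex X" and "finite X" and "sc_connected X"
    and "cellular_perversity \<delta>"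
  shows "qiso (ldual (A_data X \<delta> :: ('v set, 'a::field_char_0) qdata)) (B_data X (\<lambda>n. - \<delta> n)) \<and>
         qiso (ldual (B_data X \<delta> :: ('v set, 'a::field_char_0) qdata)) (A_data X (\<lambda>n. - \<delta> n))"
  by (intro conjI qiso_ldual_A_data_B_data qiso_ldual_B_data_A_data assms(2))

end
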